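(* Fix an edge $ij\in\mathcal E$, dual variables $(\lambda,\xi)$, and let $\Gamma=\Gamma(\lambda,\xi)$. Then: (a) If $\xi'=\xi$ and $\lambda'$ agrees with $\lambda$ except $\lambda'_{ij}(x)=\lambda_{ij}(x)+\frac12\log\frac{\sum_{x'}\Gamma_{ij}(x,x')}{\Gamma_i(x)}$ for all $x\in\chi$ (so that $\Gamma(\lambda',\xi')$ is the projection of $\Gamma$ onto $\{\Gamma_{ij}\mathbb 1=\Gamma_i\}$), then $L(\lambda',\xi')-L(\lambda,\xi)=2h^2(\Gamma_{ij}\mathbb 1,\Gamma_i)$. (b) If $\lambda'=\lambda$ and $\xi'$ agrees with $\xi$ except $\xi'_{ij}=\xi_{ij}+\log\sum_{x_i,x_j}\Gamma_{ij}(x_i,x_j)$ and $\xi'_i=\xi_i+\log\sum_x\Gamma_i(x)$ (so that $\Gamma(\lambda',\xi')$ is obtained by normalizing $\Gamma_{ij}$ and $\Gamma_i$), then $L(\lambda',\xi')-L(\lambda,\xi)\ge0$. (c) If $\xi'=\xi$ and $\lambda'$ agrees with $\lambda$ except $\lambda'_{ji}(x)=\lambda_{ji}(x)+\frac12\log\frac{\sum_{x'}\Gamma_{ij}(x',x)}{\Gamma_j(x)}$ for all $x\in\chi$ (so that $\Gamma(\lambda',\xi')$ is the projection onto $\{\Gamma_{ij}^\top\mathbb 1=\Gamma_j\}$), then $L(\lambda',\xi')-L(\lambda,\xi)=2h^2(\Gamma_{ij}^\top\mathbb 1,\Gamma_j)$. (d) If $\lambda'=\lambda$ and $\xi'$ agrees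 with $\xi$ except $\xi'_{ij}=\xi_{ij}+\log\sum_{x_i,x_j}\Gamma_{ij}(x_i,x_j)$ and $\xi'_j=\xi_j+\log\sum_x\Gamma_j(x)$, then $L(\lambda',\xi')-L(\lambda,\xi)\ge0$.
   Context: Let $G=(\mathcal V,\mathcal E)$ be a graph with $\mathcal V=\{1,\dots,n\}$, edges written as ordered pairs $ij$, $N(i)$ the set of neighbours of $i$, $\chi=\{0,\dots,d-1\}$, $\eta>0$, and $C$ a cost vector with components $C_i\in\mathbb R^d$ ($i\in\mathcal V$), $C_{ij}\in\mathbb R^{d\times d}$ ($ij\in\mathcal E$). Dual variables $(\lambda,\xi)$ consist of, for each edge $ij\in\mathcal E$, vectors $\lambda_{ij}\in\mathbb R^d$ (associated with vertex $i$) and $\lambda_{ji}\in\mathbb R^d$ (associated with vertex $j$) and a scalar $\xi_{ij}$, and for each vertex a scalar $\xi_i$. The associated marginal vector $\Gamma(\lambda,\xi)$ is $\Gamma_{ij}(x_i,x_j)=\exp(-\eta C_{ij}(x_i,x_j)-\lambda_{ij}(x_i)-\lambda_{ji}(x_j)-\xi_{ij})$ and $\Gamma_i(x)=\exp(-\eta C_i(x)-\xi_i+\sum_{j\in N(i)}\lambda_{ij}(x))$. The Lyapunov function is $L(\lambda,\xi)=-\sum_{ij\in\mathcal E}\sum_{x_i,x_j}\Gamma_{ij}(x_i,x_j)-\sum_{i\in\mathcal V}\sum_x\Gamma_i(x)-\sum_{ij\in\mathcal E}\xi_{ij}-\sum_{i\in\mathcal V}\xi_i+\sum_{ij\in\mathcal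 E}\sum_{x_i,x_j}e^{-\eta C_{ij}(x_i,x_j)}+\sum_{i}\sum_{x}e^{-\eta C_i(x)}$, with $\Gamma=\Gamma(\lambda,\xi)$. For nonnegative vectors $p,q$, $h(p,q)=\frac1{\sqrt2}\|\sqrt p-\sqrt q\|_2$ (entrywise square roots). *)

theory Defs
  imports Complex_Main
begin

text \<open>Vertices are 1..n, labels chi = {0..<d}.
  Dual variables: lam i j x is lambda_{ij}(x) (the vector of edge {i,j} associated with
  vertex i); xiE e is xi_e for an edge e; xiV i is xi_i.\<close>

definition nbrs :: "(nat \<times> nat) set \<Rightarrow> nat \<Rightarrow> nat set" where
  "nbrs E i = {j. (i, j) \<in> E \<or> (j, i) \<in> E}"

definition GammaE :: "real \<Rightarrow> (nat \<times> nat \<Rightarrow> nat \<Rightarrow> nat \<Rightarrow> real)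
    \<Rightarrow> (nat \<Rightarrow> nat \<Rightarrow> nat \<Rightarrow> real) \<Rightarrow> (nat \<times> nat \<Rightarrow> real)
    \<Rightarrow> nat \<times> nat \<Rightarrow> nat \<Rightarrow> nat \<Rightarrow> real" where
  "GammaE eta CE lam xiE e x y =
     exp (- eta * CE e x y - lam (fst e) (snd e) x - lam (snd e) (fst e) y - xiE e)"

definition GammaV :: "(nat \<times> nat) set \<Rightarrow> real \<Rightarrow> (nat \<Rightarrow> nat \<Rightarrow> real)
    \<Rightarrow> (nat \<Rightarrow> nat \<Rightarrow> nat \<Rightarrow> real) \<Rightarrow> (nat \<Rightarrow> real) \<Rightarrow> nat \<Rightarrow> nat \<Rightarrow> real" where
  "GammaV E eta CV lam xiV i x =
     exp (- eta * CV i x - xiV i + (\<Sum>j\<in>nbrs E i. lam i j x))"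

definition Lyap :: "nat \<Rightarrow> nat \<Rightarrow> (nat \<times> nat) set \<Rightarrow> real
    \<Rightarrow> (nat \<Rightarrow> nat \<Rightarrow> real) \<Rightarrow> (nat \<times> nat \<Rightarrow> nat \<Rightarrow> nat \<Rightarrow> real)
    \<Rightarrow> (nat \<Rightarrow> nat \<Rightarrow> nat \<Rightarrow> real) \<Rightarrow> (nat \<times> nat \<Rightarrow> real) \<Rightarrow> (nat \<Rightarrow> real) \<Rightarrow> real" where
  "Lyap n d E eta CV CE lam xiE xiV =
     - (\<Sum>e\<in>E. \<Sum>x<d. \<Sum>y<d. GammaE eta CE lam xiE e x y)
     - (\<Sum>i\<in>{1..n}. \<Sum>x<d. GammaV E eta CV lam xiV i x)
     - (\<Sum>e\<in>E. xiE e) - (\<Sum>i\<in>{1..n}. xiV i)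
     + (\<Sum>e\<in>E. \<Sum>x<d. \<Sum>y<d. exp (- eta * CE e x y))
     + (\<Sum>i\<in>{1..n}. \<Sum>x<d. exp (- eta * CV i x))"

definition hellinger :: "nat \<Rightarrow> (nat \<Rightarrow> real) \<Rightarrow> (nat \<Rightarrow> real) \<Rightarrow> real" where
  "hellinger d p q = (1 / sqrt 2) * sqrt (\<Sum>x<d. (sqrt (p x) - sqrt (q x))^2)"

end

theory Submission
  imports Defs
begin

text \<open>Up to a constant, L is minus the total mass of all blocks Gamma_e and Gamma_v minus the
  sum of all potentials xi, so an update touching one edge and one vertex only changes their terms.
  Adding delta(x) to lambda_ij(x) multiplies row x of Gamma_ij by exp(-delta(x)) and Gamma_i(x) by
  exp(delta(x)). With a the row sums of Gamma_ij, b = Gamma_i and delta = log(a/b)/2, both new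
  masses equal the sum of sqrt(a b), so L grows by the sum of (sqrt a - sqrt b)^2 = 2 h^2(a, b).
  Adding log A to a potential whose block has mass A normalises that block, so L grows by
  A - 1 - log A, which is nonnegative. Part (c) is part (a) for the graph with every edge reversed
  and every cost matrix transposed, which has the same Lyapunov function.\<close>

lemma sum_diff_eq_except:
  fixes f g :: "'a \<Rightarrow> real"
  assumes "finite A" "a \<in> A" "\<And>x. x \<in> A \<Longrightarrow> x \<noteq> a \<Longrightarrow> f x = g x"
  shows "sum f A - sum g A = f a - g a"
proof -
  have "sum f (A - {a}) = sum g (A - {a})"
    using assms(3) by (intro sum.cong) auto
  then show ?thesis
    using assms(1,2) by (simp add: sum.remove)
qed

lemma exp_half_ln:
  assumes "0 < t"
  shows "exp (1/2 * ln t) = sqrt t"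
proof -
  have "exp (1/2 * ln t) = t powr (1/2)"
    using assms by (simp add: powr_def mult.commute)
  then show ?thesis
    using assms by (simp add: powr_half_sqrt)
qed

lemma half_log_ratio_rescaling:
  fixes a b :: real
  assumes "0 < a" "0 < b"
  shows "a * (1 - exp (- (1/2 * ln (a / b)))) + b * (1 - exp (1/2 * ln (a / b)))
    = (sqrt a - sqrt b)^2"
proof -
  define p q where "p = sqrt a" and "q = sqrt b"
  have "0 < p" "0 < q" "a = p^2" "b = q^2"
    using assms by (simp_all add: p_def q_def)
  moreover have "exp (1/2 * ln (a / b)) = p / q"
    using assms exp_half_ln[of "a / b"] by (simp add: p_def q_def real_sqrt_divide)
  ultimately show ?thesis
    by (simp add: exp_minus field_simps power2_eq_square flip: p_def q_def)
qed

lemma hellinger_sq: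
  "2 * (hellinger d p q)^2 = (\<Sum>x<d. (sqrt (p x) - sqrt (q x))^2)"
  unfolding hellinger_def by (simp add: power_divide sum_nonneg)

lemma GammaE_pos: "0 < GammaE eta CE lam xiE e x y"
  by (simp add: GammaE_def)

lemma GammaV_pos: "0 < GammaV E eta CV lam xiV v x"
  by (simp add: GammaV_def)

lemma finite_nbrs:
  assumes "finite E"
  shows "finite (nbrs E i)"
proof -
  have "nbrs E i \<subseteq> snd ` E \<union> fst ` E"
    by (force simp: nbrs_def)
  then show ?thesis
    using assms by (meson finite_Un finite_imageI finite_subset)
qed

lemma Lyap_diff_local:
  assumes "finite E" "e0 \<in> E" "v0 \<in> {1..n}"
    and "\<And>e x y. e \<in> E \<Longrightarrow> e \<noteq> e0 \<Longrightarrow> GammaE eta CE lam' xiE' e x y = GammaE eta CE lam xiE e x y"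
    and "\<And>e. e \<in> E \<Longrightarrow> e \<noteq> e0 \<Longrightarrow> xiE' e = xiE e"
    and "\<And>v x. v \<in> {1..n} \<Longrightarrow> v \<noteq> v0 \<Longrightarrow> GammaV E eta CV lam' xiV' v x = GammaV E eta CV lam xiV v x"
    and "\<And>v. v \<in> {1..n} \<Longrightarrow> v \<noteq> v0 \<Longrightarrow> xiV' v = xiV v"
  shows "Lyap n d E eta CV CE lam' xiE' xiV' - Lyap n d E eta CV CE lam xiE xiV
    = (\<Sum>x<d. \<Sum>y<d. GammaE eta CE lam xiE e0 x y) - (\<Sum>x<d. \<Sum>y<d. GammaE eta CE lam' xiE' e0 x y)
      + (\<Sum>x<d. GammaV E eta CV lam xiV v0 x) - (\<Sum>x<d. GammaV E eta CV lam' xiV' v0 x)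
      - (xiE' e0 - xiE e0) - (xiV' v0 - xiV v0)"
proof -
  have "(\<Sum>e\<in>E. \<Sum>x<d. \<Sum>y<d. GammaE eta CE lam' xiE' e x y) - (\<Sum>e\<in>E. \<Sum>x<d. \<Sum>y<d. GammaE eta CE lam xiE e x y)
      = (\<Sum>x<d. \<Sum>y<d. GammaE eta CE lam' xiE' e0 x y) - (\<Sum>x<d. \<Sum>y<d. GammaE eta CE lam xiE e0 x y)"
    "(\<Sum>v\<in>{1..n}. \<Sum>x<d. GammaV E eta CV lam' xiV' v x) - (\<Sum>v\<in>{1..n}. \<Sum>x<d. GammaV E eta CV lam xiV v x)
      = (\<Sum>x<d. GammaV E eta CV lam' xiV' v0 x) - (\<Sum>x<d. GammaV E eta CV lam xiV v0 x)"
    "sum xiE' E - sum xiE E = xiE' e0 - xiE e0"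
    "sum xiV' {1..n} - sum xiV {1..n} = xiV' v0 - xiV v0"
    by (rule sum_diff_eq_except; use assms in simp)+
  then show ?thesis
    unfolding Lyap_def by linarith
qed

lemma Lyap_shift_lam:
  assumes "finite E" "(i, j) \<in> E" "(j, i) \<notin> E" "i \<in> {1..n}"
  shows "Lyap n d E eta CV CE (lam(i := (lam i)(j := \<lambda>x. lam i j x + \<delta> x))) xiE xiV
      - Lyap n d E eta CV CE lam xiE xiV
    = (\<Sum>x<d. (\<Sum>y<d. GammaE eta CE lam xiE (i, j) x y) * (1 - exp (- \<delta> x))
        + GammaV E eta CV lam xiV i x * (1 - exp (\<delta> x)))"
proof -
  define lam' where "lam' = lam(i := (lam i)(j := \<lambda>x. lam i j x + \<delta> x))"
  have "i \<noteq> j"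
    using assms(2,3) by auto
  have GammaE_ij: "GammaE eta CE lam' xiE (i, j) x y = GammaE eta CE lam xiE (i, j) x y * exp (- \<delta> x)" for x y
    using \<open>i \<noteq> j\<close> by (simp add: lam'_def GammaE_def exp_add[symmetric] algebra_simps)
  have GammaE_other: "GammaE eta CE lam' xiE e x y = GammaE eta CE lam xiE e x y"
    if "e \<in> E" "e \<noteq> (i, j)" for e x y
    using that assms(3) by (cases e) (auto simp: lam'_def GammaE_def)
  have "finite (nbrs E i)"
    using assms(1) by (rule finite_nbrs)
  moreover have "j \<in> nbrs E i"
    using assms(2) by (simp add: nbrs_def)
  ultimately have "(\<Sum>k\<in>nbrs E i. lam' i k x) - (\<Sum>k\<in>nbrs E i. lam i k x) = \<delta> x" for x
    by (subst sum_diff_eq_except[of _ j]) (simp_all add: lam'_def)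
  then have GammaV_i: "GammaV E eta CV lam' xiV i x = GammaV E eta CV lam xiV i x * exp (\<delta> x)" for x
    by (simp add: GammaV_def exp_add[symmetric] algebra_simps)
  have GammaV_other: "GammaV E eta CV lam' xiV v x = GammaV E eta CV lam xiV v x" if "v \<noteq> i" for v x
    using that by (simp add: lam'_def GammaV_def)
  have "Lyap n d E eta CV CE lam' xiE xiV - Lyap n d E eta CV CE lam xiE xiV
    = (\<Sum>x<d. \<Sum>y<d. GammaE eta CE lam xiE (i, j) x y) - (\<Sum>x<d. \<Sum>y<d. GammaE eta CE lam' xiE (i, j) x y)
      + (\<Sum>x<d. GammaV E eta CV lam xiV i x) - (\<Sum>x<d. GammaV E eta CV lam' xiV i x)"
    using Lyap_diff_local[of E "(i, j)" i n] assms GammaE_other GammaV_other by simp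
  also have "\<dots> = (\<Sum>x<d. (\<Sum>y<d. GammaE eta CE lam xiE (i, j) x y) * (1 - exp (- \<delta> x))
        + GammaV E eta CV lam xiV i x * (1 - exp (\<delta> x)))"
    unfolding GammaE_ij GammaV_i
    by (simp add: right_diff_distrib sum_subtractf sum.distrib sum_distrib_right)
  finally show ?thesis
    unfolding lam'_def .
qed

lemma Lyap_shift_xi:
  assumes "finite E" "e \<in> E" "v \<in> {1..n}"
  shows "Lyap n d E eta CV CE lam (xiE(e := xiE e + s)) (xiV(v := xiV v + t))
      - Lyap n d E eta CV CE lam xiE xiV
    = (\<Sum>x<d. \<Sum>y<d. GammaE eta CE lam xiE e x y) * (1 - exp (- s)) - s
      + (\<Sum>x<d. GammaV E eta CV lam xiV v x) * (1 - exp (- t)) - t"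
proof -
  have GammaE_e: "GammaE eta CE lam (xiE(e := xiE e + s)) e x y = GammaE eta CE lam xiE e x y * exp (- s)" for x y
    by (simp add: GammaE_def exp_add[symmetric] algebra_simps)
  have GammaV_v: "GammaV E eta CV lam (xiV(v := xiV v + t)) v x = GammaV E eta CV lam xiV v x * exp (- t)" for x
    by (simp add: GammaV_def exp_add[symmetric] algebra_simps)
  have "Lyap n d E eta CV CE lam (xiE(e := xiE e + s)) (xiV(v := xiV v + t)) - Lyap n d E eta CV CE lam xiE xiV
    = (\<Sum>x<d. \<Sum>y<d. GammaE eta CE lam xiE e x y) - (\<Sum>x<d. \<Sum>y<d. GammaE eta CE lam (xiE(e := xiE e + s)) e x y)
      + (\<Sum>x<d. GammaV E eta CV lam xiV v x) - (\<Sum>x<d. GammaV E eta CV lam (xiV(v := xiV v + t)) v x)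
      - s - t"
    using Lyap_diff_local[of E e v n] assms by (simp add: GammaE_def GammaV_def)
  then show ?thesis
    unfolding GammaE_e GammaV_v
    by (simp add: right_diff_distrib sum_distrib_right)
qed

lemma nbrs_transpose: "nbrs (prod.swap ` E) = nbrs E"
  unfolding nbrs_def by (auto intro: rev_image_eqI)

lemma GammaV_transpose: "GammaV (prod.swap ` E) = GammaV E"
  by (simp add: GammaV_def nbrs_transpose fun_eq_iff)

lemma GammaE_transpose:
  "GammaE eta (\<lambda>e x y. CE (prod.swap e) y x) lam (xiE \<circ> prod.swap) e x y
     = GammaE eta CE lam xiE (prod.swap e) y x"
  by (simp add: GammaE_def algebra_simps)

lemma Lyap_transpose:
  "Lyap n d (prod.swap ` E) eta CV (\<lambda>e x y. CE (prod.swap e) y x) lam (xiE \<circ> prod.swap) xiV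
     = Lyap n d E eta CV CE lam xiE xiV"
proof -
  have reindex: "(\<Sum>e\<in>prod.swap ` E. f e) = (\<Sum>e\<in>E. f (prod.swap e))" for f :: "_ \<Rightarrow> real"
    by (simp add: sum.reindex)
  have masses: "(\<Sum>e\<in>prod.swap ` E. \<Sum>x<d. \<Sum>y<d. GammaE eta (\<lambda>e x y. CE (prod.swap e) y x) lam (xiE \<circ> prod.swap) e x y)
      = (\<Sum>e\<in>E. \<Sum>x<d. \<Sum>y<d. GammaE eta CE lam xiE e x y)"
    unfolding reindex GammaE_transpose swap_swap by (rule sum.cong[OF refl], rule sum.swap)
  have priors: "(\<Sum>e\<in>prod.swap ` E. \<Sum>x<d. \<Sum>y<d. exp (- eta * CE (prod.swap e) y x))
      = (\<Sum>e\<in>E. \<Sum>x<d. \<Sum>y<d. exp (- eta * CE e x y))"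
    unfolding reindex swap_swap by (rule sum.cong[OF refl], rule sum.swap)
  have potentials: "(\<Sum>e\<in>prod.swap ` E. (xiE \<circ> prod.swap) e) = sum xiE E"
    unfolding reindex by simp
  show ?thesis
    by (simp only: Lyap_def GammaV_transpose masses priors potentials)
qed

lemma Lyap_row_projection:
  assumes "0 < d" "finite E" "(i, j) \<in> E" "(j, i) \<notin> E" "i \<in> {1..n}"
  shows "Lyap n d E eta CV CE (lam(i := (lam i)(j := \<lambda>x. lam i j x + 1/2 * ln
            ((\<Sum>x'<d. GammaE eta CE lam xiE (i, j) x x') / GammaV E eta CV lam xiV i x)))) xiE xiV
      - Lyap n d E eta CV CE lam xiE xiV
    = 2 * (hellinger d (\<lambda>x. \<Sum>x'<d. GammaE eta CE lam xiE (i, j) x x') (GammaV E eta CV lam xiV i))^2"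
proof -
  let ?a = "\<lambda>x. \<Sum>x'<d. GammaE eta CE lam xiE (i, j) x x'" and ?b = "GammaV E eta CV lam xiV i"
  have "0 < ?a x" for x
    using assms(1) GammaE_pos by (intro sum_pos) auto
  then show ?thesis
    unfolding Lyap_shift_lam[OF assms(2-5), where \<delta> = "\<lambda>x. 1/2 * ln (?a x / ?b x)"] hellinger_sq
    by (intro sum.cong refl half_log_ratio_rescaling GammaV_pos)
qed

lemma Lyap_column_projection:
  assumes "0 < d" "finite E" "(i, j) \<in> E" "(j, i) \<notin> E" "j \<in> {1..n}"
  shows "Lyap n d E eta CV CE (lam(j := (lam j)(i := \<lambda>x. lam j i x + 1/2 * ln
            ((\<Sum>x'<d. GammaE eta CE lam xiE (i, j) x' x) / GammaV E eta CV lam xiV j x)))) xiE xiV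
      - Lyap n d E eta CV CE lam xiE xiV
    = 2 * (hellinger d (\<lambda>x. \<Sum>x'<d. GammaE eta CE lam xiE (i, j) x' x) (GammaV E eta CV lam xiV j))^2"
proof -
  have "finite (prod.swap ` E)" "(j, i) \<in> prod.swap ` E" "(i, j) \<notin> prod.swap ` E"
    using assms(2-4) by (auto intro: rev_image_eqI)
  from Lyap_row_projection[OF assms(1) this assms(5),
      of eta CV "\<lambda>e x y. CE (prod.swap e) y x" lam "xiE \<circ> prod.swap" xiV]
  show ?thesis
    by (simp add: Lyap_transpose GammaE_transpose GammaV_transpose)
qed

lemma Lyap_normalisation_nonneg:
  assumes "0 < d" "finite E" "e \<in> E" "v \<in> {1..n}"
  shows "0 \<le> Lyap n d E eta CV CE lam
        (xiE(e := xiE e + ln (\<Sum>x<d. \<Sum>y<d. GammaE eta CE lam xiE e x y)))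
        (xiV(v := xiV v + ln (\<Sum>x<d. GammaV E eta CV lam xiV v x)))
      - Lyap n d E eta CV CE lam xiE xiV"
proof -
  have gain_nonneg: "0 \<le> m * (1 - exp (- ln m)) - ln m" if "0 < m" for m :: real
    using that ln_le_minus_one[of m] by (simp add: exp_minus right_diff_distrib)
  have "0 < (\<Sum>x<d. \<Sum>y<d. GammaE eta CE lam xiE e x y)" "0 < (\<Sum>x<d. GammaV E eta CV lam xiV v x)"
    using assms(1) GammaE_pos GammaV_pos by (intro sum_pos; auto)+
  from this[THEN gain_nonneg] show ?thesis
    unfolding Lyap_shift_xi[OF assms(2-4)] by linarith
qed

theorem lemma1:
  fixes n d :: nat and E :: "(nat \<times> nat) set" and eta :: real
    and CV :: "nat \<Rightarrow> nat \<Rightarrow> real" and CE :: "nat \<times> nat \<Rightarrow> nat \<Rightarrow> nat \<Rightarrow> real"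
    and lam :: "nat \<Rightarrow> nat \<Rightarrow> nat \<Rightarrow> real" and xiE :: "nat \<times> nat \<Rightarrow> real"
    and xiV :: "nat \<Rightarrow> real" and i j :: nat
  assumes d_pos: "0 < d"
    and eta_pos: "0 < eta"
    and E_sub: "E \<subseteq> {1..n} \<times> {1..n}"
    and E_simple: "\<forall>(a, b)\<in>E. a \<noteq> b \<and> (b, a) \<notin> E"
    and ij_edge: "(i, j) \<in> E"
  shows
   "(let lam' = lam(i := (lam i)(j := (\<lambda>x. lam i j x + 1/2 * ln
            ((\<Sum>x'<d. GammaE eta CE lam xiE (i, j) x x') / GammaV E eta CV lam xiV i x))))
     in Lyap n d E eta CV CE lam' xiE xiV - Lyap n d E eta CV CE lam xiE xiV
        = 2 * (hellinger d (\<lambda>x. \<Sum>x'<d. GammaE eta CE lam xiE (i, j) x x')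
                           (GammaV E eta CV lam xiV i))^2)
  \<and> (let xiE' = xiE((i, j) := xiE (i, j) + ln (\<Sum>x<d. \<Sum>y<d. GammaE eta CE lam xiE (i, j) x y));
         xiV' = xiV(i := xiV i + ln (\<Sum>x<d. GammaV E eta CV lam xiV i x))
     in Lyap n d E eta CV CE lam xiE' xiV' - Lyap n d E eta CV CE lam xiE xiV \<ge> 0)
  \<and> (let lam' = lam(j := (lam j)(i := (\<lambda>x. lam j i x + 1/2 * ln
            ((\<Sum>x'<d. GammaE eta CE lam xiE (i, j) x' x) / GammaV E eta CV lam xiV j x))))
     in Lyap n d E eta CV CE lam' xiE xiV - Lyap n d E eta CV CE lam xiE xiV
        = 2 * (hellinger d (\<lambda>x. \<Sum>x'<d. GammaE eta CE lam xiE (i, j) x' x)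
                           (GammaV E eta CV lam xiV j))^2)
  \<and> (let xiE' = xiE((i, j) := xiE (i, j) + ln (\<Sum>x<d. \<Sum>y<d. GammaE eta CE lam xiE (i, j) x y));
         xiV' = xiV(j := xiV j + ln (\<Sum>x<d. GammaV E eta CV lam xiV j x))
     in Lyap n d E eta CV CE lam xiE' xiV' - Lyap n d E eta CV CE lam xiE xiV \<ge> 0)"
proof -
  have "finite E"
    using E_sub by (rule finite_subset) simp
  moreover have "(j, i) \<notin> E"
    using E_simple ij_edge by auto
  moreover have "i \<in> {1..n}" "j \<in> {1..n}"
    using E_sub ij_edge by auto
  ultimately show ?thesis
    unfolding Let_def
    using Lyap_row_projection Lyap_column_projection Lyap_normalisation_nonneg d_pos ij_edge
    by simp
qed

end
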